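(* Let $\gamma > 1.562$. Let $I$ be a $\gamma$-stable instance of the Euclidean Steiner tree problem. Then the (unique) optimal Steiner tree $\mathrm{OPT}$ of $I$ contains no Steiner points, i.e. every vertex of $\mathrm{OPT}$ is a terminal.
   Context: An instance of the Euclidean Steiner tree problem consists of a finite set $V \subset \mathbb{R}^d$ of points, a set $T \subseteq V$ of terminals, and the complete graph on $V$ with edge weights $w_{uv} = \|u - v\|$ (Euclidean distance). Points of $V \setminus T$ are called Steiner points. A Steiner tree is a tree in this complete graph whose vertex set contains all of $T$ (it may contain some Steiner points); its weight is the sum of the weights of its edges. For $\gamma > 1$, the instance is $\gamma$-stable if it has a minimum-weight Steiner tree $\mathrm{OPT}$ such that for every function $w' : V \times V \to \mathbb{R}_{\ge 0}$ with $w_{uv} \le w'_{uv} \le \gamma w_{uv}$ for all $u,v \in V$, every minimum-weight Steiner tree with respect to the weights $w'$ is equal to $\mathrm{OPT}$ (the perturbed weights $w'$ need not be Euclidean or even metric). *)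

theory Defs
  imports "HOL-Analysis.Analysis"
begin

definition graph_edges :: "'a set \<Rightarrow> 'a set set" where
  "graph_edges A = {{u, v} | u v. u \<in> A \<and> v \<in> A \<and> u \<noteq> v}"

definition is_connected :: "'a set \<Rightarrow> 'a set set \<Rightarrow> bool" where
  "is_connected Vt E \<longleftrightarrow>
     (\<forall>u\<in>Vt. \<forall>v\<in>Vt. (u, v) \<in> {(x, y). {x, y} \<in> E}\<^sup>*)"

definition is_cycle :: "'a set set \<Rightarrow> 'a list \<Rightarrow> bool" where
  "is_cycle E vs \<longleftrightarrow> length vs \<ge> 3 \<and> distinct vs \<and>
     (\<forall>i. Suc i < length vs \<longrightarrow> {vs ! i, vs ! Suc i} \<in> E) \<and>
     {last vs, hd vs} \<in> E"

definition is_tree :: "'a set \<Rightarrow> 'a set set \<Rightarrow> bool" where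
  "is_tree Vt E \<longleftrightarrow> finite Vt \<and> Vt \<noteq> {} \<and> E \<subseteq> graph_edges Vt \<and>
     is_connected Vt E \<and> \<not> (\<exists>vs. is_cycle E vs)"

definition steiner_tree :: "'a set \<Rightarrow> 'a set \<Rightarrow> 'a set \<times> 'a set set \<Rightarrow> bool" where
  "steiner_tree V T S \<longleftrightarrow> is_tree (fst S) (snd S) \<and> T \<subseteq> fst S \<and> fst S \<subseteq> V"

definition tree_weight :: "('a set \<Rightarrow> real) \<Rightarrow> 'a set \<times> 'a set set \<Rightarrow> real" where
  "tree_weight w S = (\<Sum>e\<in>snd S. w e)"

definition min_steiner_tree ::
  "('a set \<Rightarrow> real) \<Rightarrow> 'a set \<Rightarrow> 'a set \<Rightarrow> 'a set \<times> 'a set set \<Rightarrow> bool" where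
  "min_steiner_tree w V T S \<longleftrightarrow> steiner_tree V T S \<and>
     (\<forall>S'. steiner_tree V T S' \<longrightarrow> tree_weight w S \<le> tree_weight w S')"

definition eucl_weight :: "'a::euclidean_space set \<Rightarrow> real" where
  "eucl_weight e = (SOME d. \<exists>u v. e = {u, v} \<and> d = dist u v)"

definition gamma_stable :: "real \<Rightarrow> 'a::euclidean_space set \<Rightarrow> 'a set \<Rightarrow> bool" where
  "gamma_stable \<gamma> V T \<longleftrightarrow>
     (\<exists>OPT. min_steiner_tree eucl_weight V T OPT \<and>
        (\<forall>w'. (\<forall>u\<in>V. \<forall>v\<in>V. u \<noteq> v \<longrightarrow>
                  dist u v \<le> w' {u, v} \<and> w' {u, v} \<le> \<gamma> * dist u v) \<longrightarrow>
              (\<forall>S. min_steiner_tree w' V T S \<longrightarrow> S = OPT)))"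

end

theory Submission
  imports Defs
begin

(*
  Let s be a Steiner point of OPT, N its set of d neighbours, L and Q the sums of the
  distances and squared distances from s to N, and M the largest of these distances.
  Stretching the edges of OPT by a factor c in (3/2, 2] is an admissible perturbation, so
  OPT stays optimal for the stretched weights, and no exchange of edges that leaves a
  connected graph spanning T may then pay off. Two exchanges give:
  replacing the edge sa by ab shows c |sa| <= |ab| for distinct neighbours a, b;
  deleting s and joining one neighbour k to all others shows c L <= sum_j |kj|.
  Summing the second inequality over k, Cauchy-Schwarz and the identity
  sum_{k,j} |k - j|^2 = 2d sum_j |j - s|^2 - 2 |sum_j (j - s)|^2 give c^2 L^2 <= 2dQ.
  By the first inequality and the triangle inequality all distances |sj| lie in
  [(c - 1) M, M], so Q <= cML - d(c - 1)M^2. Together,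
  (cL - dM)^2 + d^2 M^2 (2c - 3) <= 0, which is impossible; the argument needs only
  gamma > 3/2.
*)

definition adj :: "'a set set \<Rightarrow> ('a \<times> 'a) set" where
  "adj E = {(x, y). {x, y} \<in> E}"

lemma is_connected_adj: "is_connected Vt E \<longleftrightarrow> (\<forall>u\<in>Vt. \<forall>v\<in>Vt. (u, v) \<in> (adj E)\<^sup>*)"
  by (simp add: is_connected_def adj_def)

lemma sym_adj: "sym (adj E)"
  by (auto simp: sym_def adj_def insert_commute)

lemma adj_rtrancl_sym: "(x, y) \<in> (adj E)\<^sup>* \<Longrightarrow> (y, x) \<in> (adj E)\<^sup>*"
  by (rule symD[OF sym_rtrancl[OF sym_adj]])

lemma adj_rtrancl_edge: "{x, y} \<in> E \<Longrightarrow> (x, y) \<in> (adj E)\<^sup>*"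
  by (auto simp: adj_def)

lemma is_connected_reroute:
  assumes "is_connected Vt E" and "\<And>x y. {x, y} \<in> E \<Longrightarrow> (x, y) \<in> (adj E')\<^sup>*"
  shows "is_connected Vt E'"
  unfolding is_connected_adj
proof (intro ballI)
  fix u v assume "u \<in> Vt" "v \<in> Vt"
  then have "(u, v) \<in> (adj E)\<^sup>*" using assms(1) by (simp add: is_connected_adj)
  then show "(u, v) \<in> (adj E')\<^sup>*"
  proof (induction rule: rtrancl_induct)
    case (step y z)
    then have "(y, z) \<in> (adj E')\<^sup>*" using assms(2) by (simp add: adj_def)
    with step.IH show ?case by (rule rtrancl_trans)
  qed simp
qed

lemma doubleton_in_graph_edges: "{x, y} \<in> graph_edges A \<longleftrightarrow> x \<in> A \<and> y \<in> A \<and> x \<noteq> y"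
  by (auto simp: graph_edges_def doubleton_eq_iff)

lemma finite_graph_edges: "finite A \<Longrightarrow> finite (graph_edges A)"
  by (rule finite_subset[of _ "Pow A"]) (auto simp: graph_edges_def)

lemma is_cycle_path_avoiding_closing_edge:
  assumes "is_cycle E vs"
  shows "(hd vs, last vs) \<in> (adj (E - {{last vs, hd vs}}))\<^sup>*"
proof -
  define n where "n = length vs"
  have n3: "n \<ge> 3" and dist: "distinct vs"
    and edges: "\<And>i. Suc i < n \<Longrightarrow> {vs ! i, vs ! Suc i} \<in> E"
    using assms by (auto simp: is_cycle_def n_def)
  have "vs \<noteq> []" using n3 by (auto simp: n_def)
  then have hd: "hd vs = vs ! 0" and last: "last vs = vs ! (n - 1)"
    by (simp_all add: n_def hd_conv_nth last_conv_nth)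
  have "(vs ! 0, vs ! j) \<in> (adj (E - {{vs ! (n - 1), vs ! 0}}))\<^sup>*" if "j < n" for j
    using that
  proof (induction j)
    case (Suc j)
    have "j < n" "n - 1 < n" "0 < n" using Suc.prems by auto
    then have "{vs ! j, vs ! Suc j} \<noteq> {vs ! (n - 1), vs ! 0}"
      using Suc.prems n3 dist by (auto simp: doubleton_eq_iff nth_eq_iff_index_eq n_def)
    then have "(vs ! j, vs ! Suc j) \<in> adj (E - {{vs ! (n - 1), vs ! 0}})"
      using edges[OF Suc.prems] by (simp add: adj_def)
    with Suc show ?case by (meson Suc_lessD rtrancl.rtrancl_into_rtrancl)
  qed simp
  from this[of "n - 1"] n3 show ?thesis by (simp add: hd last)
qed

lemma is_connected_remove_cycle_edge:
  assumes "is_connected Vt E" and "is_cycle E vs"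
  shows "is_connected Vt (E - {{last vs, hd vs}})"
proof (rule is_connected_reroute[OF assms(1)])
  fix x y assume "{x, y} \<in> E"
  show "(x, y) \<in> (adj (E - {{last vs, hd vs}}))\<^sup>*"
  proof (cases "{x, y} = {last vs, hd vs}")
    case True
    note path = is_cycle_path_avoiding_closing_edge[OF assms(2)]
    from True show ?thesis
      using path adj_rtrancl_sym[OF path] by (auto simp: doubleton_eq_iff)
  next
    case False
    with \<open>{x, y} \<in> E\<close> show ?thesis by (intro adj_rtrancl_edge) simp
  qed
qed

lemma connected_graph_has_spanning_tree:
  assumes "finite Vt" and "Vt \<noteq> {}" and "E \<subseteq> graph_edges Vt" and "is_connected Vt E"
  obtains E' where "E' \<subseteq> E" and "is_tree Vt E'"
proof -
  define C where "C = {E'. E' \<subseteq> E \<and> is_connected Vt E'}"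
  have "finite E" using assms(1,3) finite_graph_edges finite_subset by blast
  then have "finite C" by (auto simp: C_def)
  moreover have "E \<in> C" using assms(4) by (simp add: C_def)
  ultimately obtain E0 where "is_arg_min card (\<lambda>E'. E' \<in> C) E0"
    using ex_is_arg_min_if_finite by blast
  then have E0: "E0 \<subseteq> E" "is_connected Vt E0" and minimal: "\<And>E'. E' \<in> C \<Longrightarrow> \<not> card E' < card E0"
    by (auto simp: is_arg_min_def C_def)
  have "\<not> is_cycle E0 vs" for vs
  proof
    assume cyc: "is_cycle E0 vs"
    then have "E0 - {{last vs, hd vs}} \<in> C"
      using E0 is_connected_remove_cycle_edge by (auto simp: C_def)
    moreover have "card (E0 - {{last vs, hd vs}}) < card E0"
      using cyc E0(1) \<open>finite E\<close> by (intro card_Diff1_less) (auto simp: is_cycle_def finite_subset)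
    ultimately show False using minimal by blast
  qed
  then have "is_tree Vt E0" using assms E0 by (auto simp: is_tree_def)
  with E0(1) show thesis by (rule that)
qed

definition nbrs :: "'a set set \<Rightarrow> 'a \<Rightarrow> 'a set" where
  "nbrs E s = {j. {s, j} \<in> E}"

lemma nbrs_subset:
  assumes "E \<subseteq> graph_edges Vt"
  shows "nbrs E s \<subseteq> Vt - {s}"
proof
  fix j assume "j \<in> nbrs E s"
  then have "{s, j} \<in> graph_edges Vt" using assms by (auto simp: nbrs_def)
  then show "j \<in> Vt - {s}" by (auto simp: doubleton_in_graph_edges)
qed

lemma nbrs_nonempty:
  assumes "is_connected Vt E" and "s \<in> Vt" and "t \<in> Vt" and "s \<noteq> t"
  shows "nbrs E s \<noteq> {}"
proof -
  have "(s, t) \<in> (adj E)\<^sup>*" using assms(1-3) by (simp add: is_connected_adj)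
  with \<open>s \<noteq> t\<close> obtain j where "(s, j) \<in> adj E" by (metis converse_rtranclE)
  then show ?thesis by (auto simp: adj_def nbrs_def)
qed

lemma is_connected_swap_edge:
  assumes "is_connected Vt E" and "a \<in> nbrs E s" and "b \<in> nbrs E s" and "a \<noteq> b"
  shows "is_connected Vt (insert {a, b} (E - {{s, a}}))"
proof (rule is_connected_reroute[OF assms(1)])
  let ?E' = "insert {a, b} (E - {{s, a}})"
  have "{s, b} \<in> ?E'" using assms(2-4) by (auto simp: nbrs_def doubleton_eq_iff)
  moreover have "{b, a} \<in> ?E'" by (simp add: insert_commute)
  ultimately have "(s, a) \<in> (adj ?E')\<^sup>*" by (meson adj_rtrancl_edge rtrancl_trans)
  fix x y assume "{x, y} \<in> E"
  show "(x, y) \<in> (adj ?E')\<^sup>*"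
  proof (cases "{x, y} = {s, a}")
    case True
    then have "(x, y) = (s, a) \<or> (x, y) = (a, s)" by (auto simp: doubleton_eq_iff)
    with \<open>(s, a) \<in> (adj ?E')\<^sup>*\<close> show ?thesis by (auto intro: adj_rtrancl_sym)
  next
    case False
    with \<open>{x, y} \<in> E\<close> show ?thesis by (intro adj_rtrancl_edge) simp
  qed
qed

lemma is_connected_move_star:
  assumes "is_connected Vt E" and "E \<subseteq> graph_edges Vt" and "k \<in> nbrs E s"
  shows "is_connected (Vt - {s})
    ((E - (\<lambda>j. {s, j}) ` nbrs E s) \<union> (\<lambda>j. {k, j}) ` (nbrs E s - {k}))"
    (is "is_connected _ ?E'")
proof -
  have reach: "y = s \<or> (k, y) \<in> (adj ?E')\<^sup>*" if "(k, y) \<in> (adj E)\<^sup>*" for y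
    using that
  proof (induction rule: rtrancl_induct)
    case (step y z)
    then have yz: "{y, z} \<in> E" by (simp add: adj_def)
    consider "z = s" | "y = s" "z \<noteq> s" | "y \<noteq> s" "z \<noteq> s" by blast
    then show ?case
    proof cases
      case 2
      with yz have "z \<in> nbrs E s" by (simp add: nbrs_def)
      then have "z = k \<or> {k, z} \<in> ?E'" by blast
      then show ?thesis by (auto intro: adj_rtrancl_edge)
    next
      case 3
      then have "{y, z} \<notin> (\<lambda>j. {s, j}) ` nbrs E s" by (auto simp: doubleton_eq_iff)
      with yz have "(y, z) \<in> adj ?E'" by (simp add: adj_def)
      with 3 step.IH show ?thesis by (meson rtrancl.rtrancl_into_rtrancl)
    qed simp
  qed simp
  have "k \<in> Vt" using nbrs_subset[OF assms(2)] assms(3) by blast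
  show ?thesis
    unfolding is_connected_adj
  proof (intro ballI)
    fix u v assume "u \<in> Vt - {s}" "v \<in> Vt - {s}"
    with \<open>k \<in> Vt\<close> assms(1) have "(k, u) \<in> (adj ?E')\<^sup>*" "(k, v) \<in> (adj ?E')\<^sup>*"
      using reach by (auto simp: is_connected_adj)
    then show "(u, v) \<in> (adj ?E')\<^sup>*" by (meson adj_rtrancl_sym rtrancl_trans)
  qed
qed

lemma eucl_weight_doubleton [simp]: "eucl_weight {u, v} = dist u v"
proof -
  have "\<exists>u' v'. {u, v} = {u', v'} \<and> eucl_weight {u, v} = dist u' v'"
    unfolding eucl_weight_def by (rule someI_ex) blast
  then show ?thesis by (auto simp: doubleton_eq_iff dist_commute)
qed

lemma eucl_weight_nonneg: "e \<in> graph_edges A \<Longrightarrow> 0 \<le> eucl_weight e"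
  by (auto simp: graph_edges_def)

lemma finite_steiner_trees: "finite V \<Longrightarrow> finite {S. steiner_tree V T S}"
proof (rule finite_subset)
  show "{S. steiner_tree V T S} \<subseteq> Pow V \<times> Pow (Pow V)"
    by (force simp: steiner_tree_def is_tree_def graph_edges_def)
qed simp

lemma ex_min_steiner_tree:
  assumes "finite V" and "steiner_tree V T S"
  obtains S' where "min_steiner_tree w V T S'"
proof -
  obtain S' where "is_arg_min (tree_weight w) (\<lambda>S. S \<in> {S. steiner_tree V T S}) S'"
    using ex_is_arg_min_if_finite[OF finite_steiner_trees[OF assms(1)]] assms(2) by blast
  then show thesis
    by (intro that) (auto simp: is_arg_min_def min_steiner_tree_def not_less)
qed

lemma min_steiner_tree_le_connected:
  assumes "min_steiner_tree w V T S"
    and "finite Vt" and "Vt \<noteq> {}" and "T \<subseteq> Vt" and "Vt \<subseteq> V"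
    and "E \<subseteq> graph_edges Vt" and "is_connected Vt E" and "\<And>e. e \<in> E \<Longrightarrow> 0 \<le> w e"
  shows "tree_weight w S \<le> (\<Sum>e\<in>E. w e)"
proof -
  obtain E' where "E' \<subseteq> E" and "is_tree Vt E'"
    using connected_graph_has_spanning_tree assms(2,3,6,7) by blast
  then have "tree_weight w S \<le> tree_weight w (Vt, E')"
    using assms(1,4,5) by (simp add: min_steiner_tree_def steiner_tree_def)
  also have "\<dots> \<le> (\<Sum>e\<in>E. w e)"
    unfolding tree_weight_def snd_conv using \<open>E' \<subseteq> E\<close> assms(2,6,8)
    by (intro sum_mono2) (auto intro: finite_subset finite_graph_edges)
  finally show ?thesis .
qed

lemma gamma_stable_min_steiner_tree:
  assumes "gamma_stable \<gamma> V T" and "finite V" and "1 \<le> \<gamma>"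
    and "min_steiner_tree eucl_weight V T OPT"
    and "\<forall>u\<in>V. \<forall>v\<in>V. u \<noteq> v \<longrightarrow> dist u v \<le> w {u, v} \<and> w {u, v} \<le> \<gamma> * dist u v"
  shows "min_steiner_tree w V T OPT"
proof -
  obtain OPT' where unique: "\<And>w S. \<forall>u\<in>V. \<forall>v\<in>V. u \<noteq> v \<longrightarrow>
        dist u v \<le> w {u, v} \<and> w {u, v} \<le> \<gamma> * dist u v \<Longrightarrow>
      min_steiner_tree w V T S \<Longrightarrow> S = OPT'"
    using assms(1) unfolding gamma_stable_def by blast
  have "OPT = OPT'"
    using unique[OF _ assms(4)] assms(3) by simp
  have "steiner_tree V T OPT" using assms(4) by (simp add: min_steiner_tree_def)
  then obtain S where "min_steiner_tree w V T S"
    using ex_min_steiner_tree assms(2) by blast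
  with unique[OF assms(5)] \<open>OPT = OPT'\<close> show ?thesis by simp
qed

definition stretched_weight :: "real \<Rightarrow> 'a set set \<Rightarrow> 'a::euclidean_space set \<Rightarrow> real" where
  "stretched_weight c E e = (if e \<in> E then c * eucl_weight e else eucl_weight e)"

lemma stretched_weight_admissible:
  assumes "1 \<le> c" and "c \<le> \<gamma>"
  shows "\<forall>u\<in>V. \<forall>v\<in>V. u \<noteq> v \<longrightarrow>
    dist u v \<le> stretched_weight c E {u, v} \<and> stretched_weight c E {u, v} \<le> \<gamma> * dist u v"
proof -
  have "dist u v \<le> c * dist u v" "c * dist u v \<le> \<gamma> * dist u v" for u v :: 'a
    using assms mult_right_mono[of 1 c "dist u v"] mult_right_mono[of c \<gamma> "dist u v"] by simp_all
  moreover have "dist u v \<le> \<gamma> * dist u v" for u v :: 'a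
    using calculation order_trans by blast
  ultimately show ?thesis by (simp add: stretched_weight_def)
qed

text \<open>Because A avoids R, an added edge either lies in E - R already or lies outside E and
  costs only its Euclidean length, while OPT pays c times the length of each removed edge.\<close>

lemma stretched_min_exchange:
  assumes min: "min_steiner_tree (stretched_weight c E) V T (Vt, E)" and "0 \<le> c"
    and "R \<subseteq> E" and "A \<inter> R = {}"
    and "finite Vt'" and "Vt' \<noteq> {}" and "T \<subseteq> Vt'" and "Vt' \<subseteq> V"
    and sub: "(E - R) \<union> A \<subseteq> graph_edges Vt'" and "is_connected Vt' ((E - R) \<union> A)"
  shows "c * (\<Sum>e\<in>R. eucl_weight e) \<le> (\<Sum>e\<in>A. eucl_weight e)"
proof -
  let ?w = "stretched_weight c E"
  have "finite E"
    using min by (auto simp: min_steiner_tree_def steiner_tree_def is_tree_def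
        intro: finite_subset finite_graph_edges)
  have "finite A" using sub \<open>finite Vt'\<close> by (auto intro: finite_subset finite_graph_edges)
  have nonneg: "0 \<le> eucl_weight e" if "e \<in> (E - R) \<union> A" for e
    using sub that eucl_weight_nonneg by blast
  have "(\<Sum>e\<in>E - R. ?w e) + c * (\<Sum>e\<in>R. eucl_weight e) = tree_weight ?w (Vt, E)"
    using \<open>finite E\<close> \<open>R \<subseteq> E\<close>
    by (simp add: tree_weight_def sum.subset_diff[of R E] stretched_weight_def sum_distrib_left subsetD)
  also have "\<dots> \<le> (\<Sum>e\<in>(E - R) \<union> A. ?w e)"
    using assms(2,5-10) nonneg
    by (intro min_steiner_tree_le_connected[OF min]) (auto simp: stretched_weight_def)
  also have "\<dots> = (\<Sum>e\<in>E - R. ?w e) + (\<Sum>e\<in>A - E. ?w e)"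
  proof -
    have "(E - R) \<union> A = (E - R) \<union> (A - E)" using \<open>A \<inter> R = {}\<close> by blast
    moreover have "(\<Sum>e\<in>(E - R) \<union> (A - E). ?w e) = (\<Sum>e\<in>E - R. ?w e) + (\<Sum>e\<in>A - E. ?w e)"
      using \<open>finite E\<close> \<open>finite A\<close> by (intro sum.union_disjoint) auto
    ultimately show ?thesis by simp
  qed
  also have "\<dots> \<le> (\<Sum>e\<in>E - R. ?w e) + (\<Sum>e\<in>A. eucl_weight e)"
  proof -
    have "(\<Sum>e\<in>A - E. ?w e) = (\<Sum>e\<in>A - E. eucl_weight e)"
      by (simp add: stretched_weight_def)
    also have "\<dots> \<le> (\<Sum>e\<in>A. eucl_weight e)"
      using \<open>finite A\<close> nonneg by (intro sum_mono2) auto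
    finally show ?thesis by simp
  qed
  finally show ?thesis by simp
qed

lemma stretched_min_swap_edge:
  assumes min: "min_steiner_tree (stretched_weight c E) V T (Vt, E)" and "0 \<le> c"
    and "a \<in> nbrs E s" and "b \<in> nbrs E s" and "a \<noteq> b"
  shows "c * dist s a \<le> dist a b"
proof -
  have tree: "is_tree Vt E" "T \<subseteq> Vt" "Vt \<subseteq> V"
    using min by (simp_all add: min_steiner_tree_def steiner_tree_def)
  then have "a \<in> Vt - {s}" "b \<in> Vt - {s}"
    using tree(1) nbrs_subset[of E Vt s] assms(3,4) by (auto simp: is_tree_def)
  have "c * (\<Sum>e\<in>{{s, a}}. eucl_weight e) \<le> (\<Sum>e\<in>{{a, b}}. eucl_weight e)"
  proof (rule stretched_min_exchange[OF min \<open>0 \<le> c\<close>])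
    show "(E - {{s, a}}) \<union> {{a, b}} \<subseteq> graph_edges Vt"
      using tree \<open>a \<in> Vt - {s}\<close> \<open>b \<in> Vt - {s}\<close> \<open>a \<noteq> b\<close>
      by (auto simp: is_tree_def doubleton_in_graph_edges)
    show "is_connected Vt ((E - {{s, a}}) \<union> {{a, b}})"
      using is_connected_swap_edge[of Vt E a s b] tree assms(3-5) by (simp add: is_tree_def)
    show "{{s, a}} \<subseteq> E" using assms(3) by (simp add: nbrs_def)
    show "{{a, b}} \<inter> {{s, a}} = {}"
      using \<open>a \<noteq> b\<close> \<open>b \<in> Vt - {s}\<close> by (auto simp: doubleton_eq_iff)
    show "finite Vt" "Vt \<noteq> {}" using tree \<open>a \<in> Vt - {s}\<close> by (auto simp: is_tree_def)
  qed (use tree in auto)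
  then show ?thesis by simp
qed

lemma stretched_min_move_star:
  assumes min: "min_steiner_tree (stretched_weight c E) V T (Vt, E)" and "0 \<le> c"
    and "s \<notin> T" and "k \<in> nbrs E s"
  shows "c * (\<Sum>j\<in>nbrs E s. dist s j) \<le> (\<Sum>j\<in>nbrs E s. dist k j)"
proof -
  let ?N = "nbrs E s" and ?R = "(\<lambda>j. {s, j}) ` nbrs E s" and ?A = "(\<lambda>j. {k, j}) ` (nbrs E s - {k})"
  have tree: "is_tree Vt E" "T \<subseteq> Vt" "Vt \<subseteq> V"
    using min by (simp_all add: min_steiner_tree_def steiner_tree_def)
  have N: "?N \<subseteq> Vt - {s}" using tree(1) nbrs_subset[of E Vt s] by (simp add: is_tree_def)
  have inj: "inj_on (\<lambda>j. {x, j}) X" for x :: 'a and X by (auto simp: inj_on_def doubleton_eq_iff)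
  have "c * (\<Sum>e\<in>?R. eucl_weight e) \<le> (\<Sum>e\<in>?A. eucl_weight e)"
  proof (rule stretched_min_exchange[OF min \<open>0 \<le> c\<close>])
    show "(E - ?R) \<union> ?A \<subseteq> graph_edges (Vt - {s})"
      using tree N \<open>k \<in> ?N\<close>
    proof -
      have "E - ?R \<subseteq> graph_edges (Vt - {s})"
      proof
        fix e assume e: "e \<in> E - ?R"
        then have "e \<in> graph_edges Vt" using tree(1) by (auto simp: is_tree_def)
        then obtain u v where "e = {u, v}" "u \<in> Vt" "v \<in> Vt" "u \<noteq> v"
          unfolding graph_edges_def by blast
        with e show "e \<in> graph_edges (Vt - {s})"
          by (auto simp: nbrs_def doubleton_in_graph_edges insert_commute)
      qed
      moreover have "?A \<subseteq> graph_edges (Vt - {s})"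
        using N \<open>k \<in> ?N\<close> by (auto simp: doubleton_in_graph_edges)
      ultimately show ?thesis by blast
    qed
    show "is_connected (Vt - {s}) ((E - ?R) \<union> ?A)"
      using tree(1) \<open>k \<in> ?N\<close> unfolding is_tree_def by (blast intro: is_connected_move_star)
    show "?R \<subseteq> E" by (auto simp: nbrs_def)
    show "?A \<inter> ?R = {}" using N \<open>k \<in> ?N\<close> by (auto simp: doubleton_eq_iff)
    show "finite (Vt - {s})" "Vt - {s} \<noteq> {}" using tree N \<open>k \<in> ?N\<close> by (auto simp: is_tree_def)
  qed (use tree \<open>s \<notin> T\<close> in auto)
  also have "(\<Sum>e\<in>?A. eucl_weight e) = (\<Sum>j\<in>?N - {k}. dist k j)"
    by (simp add: sum.reindex[OF inj])
  also have "\<dots> \<le> (\<Sum>j\<in>?N. dist k j)"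
    using N tree by (intro sum_mono2) (auto simp: is_tree_def intro: finite_subset)
  finally show ?thesis by (simp add: sum.reindex[OF inj])
qed

lemma sum_pairs_norm_diff_sq:
  fixes v :: "'b \<Rightarrow> 'a::real_inner"
  assumes "finite N"
  shows "(\<Sum>k\<in>N. \<Sum>j\<in>N. (norm (v k - v j))\<^sup>2)
     = 2 * real (card N) * (\<Sum>j\<in>N. (norm (v j))\<^sup>2) - 2 * (norm (\<Sum>j\<in>N. v j))\<^sup>2"
proof -
  have "(norm (x - y))\<^sup>2 = (norm x)\<^sup>2 + (norm y)\<^sup>2 - 2 * inner x y" for x y :: 'a
    by (simp add: power2_norm_eq_inner inner_diff_left inner_diff_right inner_commute)
  then have "(\<Sum>k\<in>N. \<Sum>j\<in>N. (norm (v k - v j))\<^sup>2)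
      = (\<Sum>k\<in>N. \<Sum>j\<in>N. (norm (v k))\<^sup>2 + (norm (v j))\<^sup>2 - 2 * inner (v k) (v j))"
    by simp
  also have "\<dots> = (\<Sum>k\<in>N. real (card N) * (norm (v k))\<^sup>2 + (\<Sum>j\<in>N. (norm (v j))\<^sup>2)
      - 2 * inner (v k) (\<Sum>j\<in>N. v j))"
    by (simp add: sum.distrib sum_subtractf sum_distrib_left inner_sum_right)
  also have "\<dots> = 2 * real (card N) * (\<Sum>j\<in>N. (norm (v j))\<^sup>2)
      - 2 * inner (\<Sum>j\<in>N. v j) (\<Sum>j\<in>N. v j)"
    by (simp add: sum.distrib sum_subtractf sum_distrib_left inner_sum_left mult.assoc)
  finally show ?thesis by (simp add: power2_norm_eq_inner)
qed

lemma sum_pairs_dist_sq_le: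
  fixes N :: "'a::real_inner set"
  assumes "finite N"
  shows "(\<Sum>k\<in>N. \<Sum>j\<in>N. dist k j)\<^sup>2 \<le> 2 * real (card N) ^ 3 * (\<Sum>j\<in>N. (dist s j)\<^sup>2)"
proof -
  let ?d = "real (card N)"
  have "(\<Sum>k\<in>N. \<Sum>j\<in>N. dist k j)\<^sup>2 = (\<Sum>p\<in>N \<times> N. dist (fst p) (snd p))\<^sup>2"
    by (simp add: sum.cartesian_product split_beta)
  also have "\<dots> \<le> (\<Sum>p\<in>N \<times> N. (dist (fst p) (snd p))\<^sup>2) * card (N \<times> N)"
    by (rule sum_squared_le_sum_of_squares)
  also have "\<dots> = ?d\<^sup>2 * (\<Sum>k\<in>N. \<Sum>j\<in>N. (norm ((k - s) - (j - s)))\<^sup>2)"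
    by (simp add: sum.cartesian_product split_beta card_cartesian_product power2_eq_square dist_norm)
  also have "\<dots> = ?d\<^sup>2 * (2 * ?d * (\<Sum>j\<in>N. (dist s j)\<^sup>2) - 2 * (norm (\<Sum>j\<in>N. j - s))\<^sup>2)"
    using sum_pairs_norm_diff_sq[OF assms, of "\<lambda>j. j - s"] by (simp add: dist_norm norm_minus_commute)
  also have "\<dots> \<le> ?d\<^sup>2 * (2 * ?d * (\<Sum>j\<in>N. (dist s j)\<^sup>2))"
    by (intro mult_left_mono) auto
  finally show ?thesis by (simp add: power2_eq_square power3_eq_cube mult_ac)
qed

lemma sum_sq_le_of_bounds:
  fixes f :: "'b \<Rightarrow> real"
  assumes "\<And>j. j \<in> N \<Longrightarrow> lo \<le> f j \<and> f j \<le> hi"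
  shows "(\<Sum>j\<in>N. (f j)\<^sup>2) \<le> (lo + hi) * sum f N - real (card N) * lo * hi"
proof -
  have "(f j)\<^sup>2 \<le> (lo + hi) * f j - lo * hi" if "j \<in> N" for j
  proof -
    have "0 \<le> (f j - lo) * (hi - f j)" using assms[OF that] by simp
    then show ?thesis by (simp add: algebra_simps power2_eq_square)
  qed
  then have "(\<Sum>j\<in>N. (f j)\<^sup>2) \<le> (\<Sum>j\<in>N. (lo + hi) * f j - lo * hi)"
    by (rule sum_mono)
  then show ?thesis by (simp add: sum_subtractf sum_distrib_left mult.assoc)
qed

lemma star_exchange_conditions_contradict:
  fixes N :: "'a::real_inner set"
  assumes "finite N" and "N \<noteq> {}" and "s \<notin> N" and "3/2 < \<gamma>" and "\<gamma> \<le> 2"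
    and sep: "\<And>a b. a \<in> N \<Longrightarrow> b \<in> N \<Longrightarrow> a \<noteq> b \<Longrightarrow> \<gamma> * dist s a \<le> dist a b"
    and far: "\<And>k. k \<in> N \<Longrightarrow> \<gamma> * (\<Sum>j\<in>N. dist s j) \<le> (\<Sum>j\<in>N. dist k j)"
  shows False
proof -
  define d where "d = real (card N)"
  define L where "L = (\<Sum>j\<in>N. dist s j)"
  define Q where "Q = (\<Sum>j\<in>N. (dist s j)\<^sup>2)"
  define M where "M = Max (dist s ` N)"
  have "d > 0" using assms(1,2) by (simp add: d_def card_gt_0_iff)
  have "M \<in> dist s ` N" using assms(1,2) by (simp add: M_def)
  then obtain a where "a \<in> N" and "dist s a = M" by auto
  then have "M > 0" using \<open>s \<notin> N\<close> by auto
  have bounds: "(\<gamma> - 1) * M \<le> dist s j \<and> dist s j \<le> M" if "j \<in> N" for j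
  proof
    show "dist s j \<le> M" using assms(1) that by (simp add: M_def)
    show "(\<gamma> - 1) * M \<le> dist s j"
    proof (cases "j = a")
      case True
      then show ?thesis using \<open>dist s a = M\<close> \<open>M > 0\<close> \<open>\<gamma> \<le> 2\<close> by (simp add: algebra_simps)
    next
      case False
      then have "\<gamma> * M \<le> dist a j" using sep[OF \<open>a \<in> N\<close> that] \<open>dist s a = M\<close> by simp
      moreover have "dist a j \<le> M + dist s j"
        using dist_triangle[of a j s] \<open>dist s a = M\<close> by (simp add: dist_commute)
      ultimately show ?thesis by (simp add: algebra_simps)
    qed
  qed
  have "Q \<le> \<gamma> * M * L - d * (\<gamma> - 1) * M\<^sup>2"
    using sum_sq_le_of_bounds[where lo = "(\<gamma> - 1) * M" and f = "dist s" and hi = M] bounds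
    by (simp add: Q_def L_def d_def algebra_simps power2_eq_square)
  have "d * (\<gamma> * L) \<le> (\<Sum>k\<in>N. \<Sum>j\<in>N. dist k j)"
  proof -
    have "(\<Sum>k\<in>N. \<gamma> * L) \<le> (\<Sum>k\<in>N. \<Sum>j\<in>N. dist k j)"
      using far by (intro sum_mono) (simp add: L_def)
    then show ?thesis by (simp add: d_def)
  qed
  moreover have "0 \<le> d * (\<gamma> * L)"
    using \<open>d > 0\<close> \<open>3/2 < \<gamma>\<close> by (simp add: L_def sum_nonneg)
  ultimately have "(d * (\<gamma> * L))\<^sup>2 \<le> (\<Sum>k\<in>N. \<Sum>j\<in>N. dist k j)\<^sup>2"
    by (simp add: power_mono)
  also have "\<dots> \<le> d\<^sup>2 * (2 * d * Q)"
    using sum_pairs_dist_sq_le[OF assms(1), of s]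
    by (simp add: Q_def d_def power2_eq_square power3_eq_cube mult_ac)
  finally have "d\<^sup>2 * (\<gamma>\<^sup>2 * L\<^sup>2) \<le> d\<^sup>2 * (2 * d * Q)"
    by (simp add: power_mult_distrib mult_ac)
  then have "\<gamma>\<^sup>2 * L\<^sup>2 \<le> 2 * d * Q"
    using \<open>d > 0\<close> by simp
  also have "\<dots> \<le> 2 * d * (\<gamma> * M * L - d * (\<gamma> - 1) * M\<^sup>2)"
    using \<open>Q \<le> \<gamma> * M * L - d * (\<gamma> - 1) * M\<^sup>2\<close> \<open>d > 0\<close> by simp
  finally have "(\<gamma> * L - d * M)\<^sup>2 + d\<^sup>2 * M\<^sup>2 * (2 * \<gamma> - 3) \<le> 0"
    by (simp add: power2_eq_square algebra_simps)
  moreover have "d\<^sup>2 * M\<^sup>2 * (2 * \<gamma> - 3) > 0" using \<open>d > 0\<close> \<open>M > 0\<close> \<open>3/2 < \<gamma>\<close> by simp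
  ultimately show False
    using zero_le_power2[of "\<gamma> * L - d * M"] by linarith
qed

theorem mainTheorem1:
  fixes V T :: "'a::euclidean_space set" and \<gamma> :: real
    and OPT :: "'a set \<times> 'a set set"
  assumes "finite V" and "T \<subseteq> V" and "T \<noteq> {}"
    and "\<gamma> > 1.562"
    and "gamma_stable \<gamma> V T"
    and "min_steiner_tree eucl_weight V T OPT"
  shows "fst OPT \<subseteq> T"
proof (rule ccontr)
  assume "\<not> fst OPT \<subseteq> T"
  obtain Vt E where OPT: "OPT = (Vt, E)" by (cases OPT)
  with \<open>\<not> fst OPT \<subseteq> T\<close> obtain s where "s \<in> Vt" "s \<notin> T" by auto
  have tree: "is_tree Vt E" "T \<subseteq> Vt"
    using assms(6) OPT by (simp_all add: min_steiner_tree_def steiner_tree_def)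
  then have N: "nbrs E s \<subseteq> Vt - {s}" "nbrs E s \<noteq> {}" "finite (nbrs E s)"
    using nbrs_subset[of E Vt s] nbrs_nonempty[of Vt E s] \<open>s \<in> Vt\<close> \<open>s \<notin> T\<close> \<open>T \<noteq> {}\<close>
    by (auto simp: is_tree_def intro: finite_subset)
  \<comment> \<open>any factor in [1, \<gamma>] is admissible; the distance bounds around s need c \<le> 2\<close>
  define c where "c = min \<gamma> 2"
  have c: "3/2 < c" "c \<le> 2" "1 \<le> c" "c \<le> \<gamma>" using assms(4) by (auto simp: c_def)
  have min: "min_steiner_tree (stretched_weight c E) V T (Vt, E)"
    using gamma_stable_min_steiner_tree[OF assms(5,1) _ assms(6) stretched_weight_admissible[OF c(3,4)]]
      OPT c by simp
  show False
  proof (rule star_exchange_conditions_contradict[OF N(3,2) _ c(1,2)])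
    show "s \<notin> nbrs E s" using N(1) by blast
  qed (use stretched_min_swap_edge[OF min] stretched_min_move_star[OF min] c \<open>s \<notin> T\<close> in auto)
qed

end
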